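(* In the session calculus, strong fairness of actions (SA) is weaker than strong fairness of components (SC): every SC-fair path is SA-fair. Likewise, weak fairness of actions (WA) is weaker than weak fairness of components (WC): every WC-fair path is WA-fair.
   Context: Session calculus: threads $P ::= \mathbf{end} \mid \bigoplus_{i\in I} p_i!\lambda_i;P_i \mid \sum_{i\in I} p_i?\lambda_i;P_i \mid X \mid \mu X.P$ (guarded recursion), thread states additionally $\langle q!\lambda\rangle;P$; networks $p[\![P]\!]\mid 0\mid N\parallel N$ with distinct locations and closed threads, modulo associativity/commutativity/unit. Transitions: (choice) $p[\![\bigoplus_{i\in I}p_i!\lambda_i;P_i]\!]\parallel N \xrightarrow{\tau} p[\![\langle p_k!\lambda_k\rangle;P_k]\!]\parallel N$; (unfold) $p[\![\mu X.P]\!]\parallel N\xrightarrow{\tau} p[\![P\{\mu X.P/X\}]\!]\parallel N$; (comm) $p_k[\![\langle q!\lambda_k\rangle;Q]\!]\parallel q[\![\sum_{i\in I}p_i?\lambda_i;P_i]\!]\parallel N \xrightarrow{(p_k,\lambda_k,q)} p_k[\![Q]\!]\parallel q[\![P_k]\!]\parallel N$. $\mathrm{comp}(t)$ is the moving location for a $\tau$-transition and $\{p,q\}$ for label $(p,\lambda,q)$. A path is a network state with a maximal sequence of transitions. For a notion of task: relentlessly enabled on a path = enabled in some state of every suffix; perpetually enabled = enabled in every state; a path $\pi$ is strongly (weakly) fair if for every suffix $\pi'$ each task relentlessly (perpetually) enabled on $\pi'$ is engaged in by $\pi'$. Components (SC/WC): tasks are locations $p$; enabled in $N$ if some transition $t$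 from $N$ has $p\in\mathrm{comp}(t)$; engaged in if the path contains such $t$. Actions (SA/WA): tasks are transition labels $\alpha$ (either $\tau$ or $(p,\lambda,q)$); enabled in $N$ if some transition labelled $\alpha$ leaves $N$; engaged in if the path contains a transition labelled $\alpha$. *)

theory Defs
  imports Main "HOL-Library.Extended_Nat"
begin

text \<open>Thread states. Sel = internal choice (p_i!l_i;P_i), Bra = external choice
  (p_i?l_i;P_i), Out q l P = the committed state <q!l>;P.  Index sets are lists.\<close>
datatype ('loc, 'lab, 'var) thread =
    End
  | Sel "('loc \<times> 'lab \<times> ('loc, 'lab, 'var) thread) list"
  | Bra "('loc \<times> 'lab \<times> ('loc, 'lab, 'var) thread) list"
  | Var 'var
  | Mu 'var "('loc, 'lab, 'var) thread"
  | Out 'loc 'lab "('loc, 'lab, 'var) thread"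

fun subst :: "'var \<Rightarrow> ('loc, 'lab, 'var) thread \<Rightarrow> ('loc, 'lab, 'var) thread \<Rightarrow> ('loc, 'lab, 'var) thread" where
  "subst X Q End = End"
| "subst X Q (Sel bs) = Sel (map (\<lambda>(p, l, P). (p, l, subst X Q P)) bs)"
| "subst X Q (Bra bs) = Bra (map (\<lambda>(p, l, P). (p, l, subst X Q P)) bs)"
| "subst X Q (Var Y) = (if X = Y then Q else Var Y)"
| "subst X Q (Mu Y P) = (if X = Y then Mu Y P else Mu Y (subst X Q P))"
| "subst X Q (Out p l P) = Out p l (subst X Q P)"

fun fv :: "('loc, 'lab, 'var) thread \<Rightarrow> 'var set" where
  "fv End = {}"
| "fv (Sel bs) = (\<Union>(p, l, P)\<in>set bs. fv P)"
| "fv (Bra bs) = (\<Union>(p, l, P)\<in>set bs. fv P)"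
| "fv (Var Y) = {Y}"
| "fv (Mu Y P) = fv P - {Y}"
| "fv (Out p l P) = fv P"

fun ug :: "('loc, 'lab, 'var) thread \<Rightarrow> 'var set" where
  "ug End = {}"
| "ug (Sel bs) = {}"
| "ug (Bra bs) = {}"
| "ug (Var Y) = {Y}"
| "ug (Mu Y P) = ug P - {Y}"
| "ug (Out p l P) = {}"

fun guarded :: "('loc, 'lab, 'var) thread \<Rightarrow> bool" where
  "guarded End = True"
| "guarded (Sel bs) = (\<forall>(p, l, P)\<in>set bs. guarded P)"
| "guarded (Bra bs) = (\<forall>(p, l, P)\<in>set bs. guarded P)"
| "guarded (Var Y) = True"
| "guarded (Mu Y P) = (Y \<notin> ug P \<and> guarded P)"
| "guarded (Out p l P) = guarded P"

fun pure :: "('loc, 'lab, 'var) thread \<Rightarrow> bool" where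
  "pure End = True"
| "pure (Sel bs) = (\<forall>(p, l, P)\<in>set bs. pure P)"
| "pure (Bra bs) = (\<forall>(p, l, P)\<in>set bs. pure P)"
| "pure (Var Y) = True"
| "pure (Mu Y P) = pure P"
| "pure (Out p l P) = False"

definition wf_state :: "('loc, 'lab, 'var) thread \<Rightarrow> bool" where
  "wf_state P \<longleftrightarrow> fv P = {} \<and> guarded P \<and>
     (pure P \<or> (\<exists>q l Q. P = Out q l Q \<and> pure Q))"

text \<open>Networks: finite maps from (distinct) locations to thread states; this
  representation builds in associativity/commutativity/unit.\<close>
type_synonym ('loc, 'lab, 'var) net = "'loc \<Rightarrow> ('loc, 'lab, 'var) thread option"

definition wf_net :: "('loc, 'lab, 'var) net \<Rightarrow> bool" where
  "wf_net N \<longleftrightarrow> finite (dom N) \<and> (\<forall>p P. N p = Some P \<longrightarrow> wf_state P)"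

datatype ('loc, 'lab) trans = TauAt 'loc | ComT 'loc 'lab 'loc

datatype ('loc, 'lab) label = Tau | Lab 'loc 'lab 'loc

fun lbl :: "('loc, 'lab) trans \<Rightarrow> ('loc, 'lab) label" where
  "lbl (TauAt p) = Tau"
| "lbl (ComT p l q) = Lab p l q"

fun comp :: "('loc, 'lab) trans \<Rightarrow> 'loc set" where
  "comp (TauAt p) = {p}"
| "comp (ComT p l q) = {p, q}"

inductive step :: "('loc, 'lab, 'var) net \<Rightarrow> ('loc, 'lab) trans \<Rightarrow> ('loc, 'lab, 'var) net \<Rightarrow> bool" where
  choice: "\<lbrakk> N p = Some (Sel bs); k < length bs; bs ! k = (q, l, P) \<rbrakk>
           \<Longrightarrow> step N (TauAt p) (N(p \<mapsto> Out q l P))"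
| unfold: "N p = Some (Mu X P) \<Longrightarrow> step N (TauAt p) (N(p \<mapsto> subst X (Mu X P) P))"
| comm: "\<lbrakk> N p = Some (Out q l Q); N q = Some (Bra bs); k < length bs; bs ! k = (p, l, P) \<rbrakk>
         \<Longrightarrow> step N (ComT p l q) (N(p \<mapsto> Q, q \<mapsto> P))"

text \<open>A path: states s 0, s 1, ..., transitions t 0, t 1, ..., of length len
  (number of transitions, possibly infinite); maximal: if finite, the last state
  has no outgoing transition.\<close>
definition is_path :: "(nat \<Rightarrow> ('loc, 'lab, 'var) net) \<Rightarrow> (nat \<Rightarrow> ('loc, 'lab) trans) \<Rightarrow> enat \<Rightarrow> bool" where
  "is_path s t len \<longleftrightarrow>
     (\<forall>i. enat i < len \<longrightarrow> step (s i) (t i) (s (Suc i))) \<and>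
     (\<forall>n. len = enat n \<longrightarrow> (\<nexists>u N'. step (s n) u N'))"

text \<open>Generic fairness, parametrised by a notion of task: en x N (task x enabled
  in state N) and eng x u (transition u engages in task x).  The suffix starting
  at position i consists of states s j with i \<le> j \<le> len and transitions t j
  with i \<le> j < len.\<close>
definition relentless where
  "relentless en s len i x \<longleftrightarrow>
     (\<forall>j. i \<le> j \<longrightarrow> enat j \<le> len \<longrightarrow> (\<exists>k. j \<le> k \<and> enat k \<le> len \<and> en x (s k)))"

definition perpetual where
  "perpetual en s len i x \<longleftrightarrow> (\<forall>k. i \<le> k \<longrightarrow> enat k \<le> len \<longrightarrow> en x (s k))"

definition engaged where
  "engaged eng t len i x \<longleftrightarrow> (\<exists>k. i \<le> k \<and> enat k < len \<and> eng x (t k))"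

definition strongly_fair where
  "strongly_fair en eng s t len \<longleftrightarrow>
     (\<forall>i x. enat i \<le> len \<longrightarrow> relentless en s len i x \<longrightarrow> engaged eng t len i x)"

definition weakly_fair where
  "weakly_fair en eng s t len \<longleftrightarrow>
     (\<forall>i x. enat i \<le> len \<longrightarrow> perpetual en s len i x \<longrightarrow> engaged eng t len i x)"

definition en_comp :: "'loc \<Rightarrow> ('loc, 'lab, 'var) net \<Rightarrow> bool" where
  "en_comp p N \<longleftrightarrow> (\<exists>u N'. step N u N' \<and> p \<in> comp u)"

definition eng_comp :: "'loc \<Rightarrow> ('loc, 'lab) trans \<Rightarrow> bool" where
  "eng_comp p u \<longleftrightarrow> p \<in> comp u"

definition en_act :: "('loc, 'lab) label \<Rightarrow> ('loc, 'lab, 'var) net \<Rightarrow> bool" where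
  "en_act a N \<longleftrightarrow> (\<exists>u N'. step N u N' \<and> lbl u = a)"

definition eng_act :: "('loc, 'lab) label \<Rightarrow> ('loc, 'lab) trans \<Rightarrow> bool" where
  "eng_act a u \<longleftrightarrow> lbl u = a"

definition SC_fair :: "(nat \<Rightarrow> ('loc, 'lab, 'var) net) \<Rightarrow> (nat \<Rightarrow> ('loc, 'lab) trans) \<Rightarrow> enat \<Rightarrow> bool" where
  "SC_fair = strongly_fair en_comp eng_comp"
definition WC_fair :: "(nat \<Rightarrow> ('loc, 'lab, 'var) net) \<Rightarrow> (nat \<Rightarrow> ('loc, 'lab) trans) \<Rightarrow> enat \<Rightarrow> bool" where
  "WC_fair = weakly_fair en_comp eng_comp"
definition SA_fair :: "(nat \<Rightarrow> ('loc, 'lab, 'var) net) \<Rightarrow> (nat \<Rightarrow> ('loc, 'lab) trans) \<Rightarrow> enat \<Rightarrow> bool" where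
  "SA_fair = strongly_fair en_act eng_act"
definition WA_fair :: "(nat \<Rightarrow> ('loc, 'lab, 'var) net) \<Rightarrow> (nat \<Rightarrow> ('loc, 'lab) trans) \<Rightarrow> enat \<Rightarrow> bool" where
  "WA_fair = weakly_fair en_act eng_act"

end

theory Submission
  imports Defs
begin

text \<open>An enabled action a has an owner p whose current state admits no move
  other than one labelled a: the sender in state \<open>\<langle>q!l\<rangle>;Q\<close> for a label
  (p,l,q), and a location in a choice or recursion state for \<tau>.  The owner keeps
  its state until it moves, so its first move engages in a.  It does move under
  component fairness: a sender is enabled whenever its output is, and a
  location with a pending \<tau> stays enabled for as long as it is idle.\<close>

lemma step_frame: "step N u N' \<Longrightarrow> p \<notin> comp u \<Longrightarrow> N' p = N p"
  by (induction rule: step.induct) auto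

lemma path_frame:
  assumes path: "is_path s t len" and idle: "\<forall>m. k \<le> m \<and> m < n \<longrightarrow> p \<notin> comp (t m)"
    and "enat n \<le> len" "k \<le> n"
  shows "s n p = s k p"
  using \<open>k \<le> n\<close> \<open>enat n \<le> len\<close> idle
proof (induction n rule: dec_induct)
  case (step n)
  then have "enat n < len"
    using Suc_ile_eq by blast
  then have "step (s n) (t n) (s (Suc n))"
    using path unfolding is_path_def by blast
  moreover have "p \<notin> comp (t n)"
    using step by simp
  ultimately show ?case
    using step \<open>enat n < len\<close> by (simp add: step_frame order_less_imp_le)
qed simp

lemma idle_component_frame:
  assumes "is_path s t len" "\<not> engaged eng_comp t len k p" "k \<le> m" "enat m \<le> len"
  shows "s m p = s k p"
proof (rule path_frame[OF assms(1) _ assms(4,3)], intro allI impI)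
  fix m' assume "k \<le> m' \<and> m' < m"
  moreover from this have "enat m' < len"
    using assms(4) by (metis enat_ord_simps(2) order_less_le_trans)
  ultimately show "p \<notin> comp (t m')"
    using assms(2) unfolding engaged_def eng_comp_def by blast
qed

definition moves_only_with :: "'loc \<Rightarrow> ('loc, 'lab) label \<Rightarrow> ('loc, 'lab, 'var) thread option \<Rightarrow> bool" where
  "moves_only_with p a P \<longleftrightarrow>
     (\<forall>M u M'. M p = P \<longrightarrow> step M u M' \<longrightarrow> p \<in> comp u \<longrightarrow> lbl u = a)"

lemma moves_only_with_Out: "moves_only_with p (Lab p l q) (Some (Out q l Q))"
proof -
  have "lbl u = Lab p l q" if "step M u M'" "p \<in> comp u" "M p = Some (Out q l Q)" for M u M'
    using that by (induction rule: step.induct) auto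
  then show ?thesis
    unfolding moves_only_with_def by blast
qed

lemma moves_only_with_Tau:
  assumes "step N (TauAt p) N'"
  shows "moves_only_with p Tau (N p)"
proof -
  have "(\<exists>bs. N p = Some (Sel bs)) \<or> (\<exists>X P. N p = Some (Mu X P))"
    using assms by (cases rule: step.cases) auto
  moreover have "lbl u = Tau"
    if "step M u M'" "p \<in> comp u" "(\<exists>bs. M p = Some (Sel bs)) \<or> (\<exists>X P. M p = Some (Mu X P))"
    for M u M'
    using that by (induction rule: step.induct) auto
  ultimately show ?thesis
    unfolding moves_only_with_def by metis
qed

lemma en_act_Lab_D: "en_act (Lab p l q) N \<Longrightarrow> \<exists>Q. N p = Some (Out q l Q)"
  unfolding en_act_def by (auto elim: step.cases)

lemma en_act_Lab_imp_en_comp: "en_act (Lab p l q) N \<Longrightarrow> en_comp p N"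
  unfolding en_act_def en_comp_def by (metis comp.simps(2) insertI1 lbl.elims label.distinct(1) label.inject)

lemma step_TauAt_local:
  assumes "step N (TauAt p) N'" "M p = N p"
  shows "\<exists>M'. step M (TauAt p) M'"
  using assms(1)
proof (cases rule: step.cases)
  case (choice bs k q l P)
  then show ?thesis using assms(2) step.choice[of M p bs k q l P] by auto
next
  case (unfold X P)
  then show ?thesis using assms(2) step.unfold[of M p X P] by auto
qed

lemma en_act_Tau_D:
  assumes "en_act Tau N"
  obtains p where "moves_only_with p Tau (N p)" "\<And>M. M p = N p \<Longrightarrow> en_comp p M"
proof -
  obtain u N' where "step N u N'" "lbl u = Tau"
    using assms unfolding en_act_def by blast
  then obtain p where tau: "step N (TauAt p) N'"
    by (cases u) auto
  have "en_comp p M" if "M p = N p" for M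
    using step_TauAt_local[of N p N' M] tau that unfolding en_comp_def by force
  with moves_only_with_Tau[OF tau] show thesis
    using that by blast
qed

lemma first_move_engages:
  assumes path: "is_path s t len" and owner: "moves_only_with p a (s k p)"
    and moves: "engaged eng_comp t len k p"
  shows "engaged eng_act t len k a"
proof -
  let ?moves_at = "\<lambda>m. k \<le> m \<and> enat m < len \<and> p \<in> comp (t m)"
  define m where "m = (LEAST m. ?moves_at m)"
  have "\<exists>m. ?moves_at m"
    using moves unfolding engaged_def eng_comp_def by blast
  then have m: "?moves_at m"
    unfolding m_def by (rule LeastI_ex)
  have "p \<notin> comp (t m')" if "k \<le> m' \<and> m' < m" for m'
  proof
    assume "p \<in> comp (t m')"
    moreover have "enat m' < len"
      using that m by (metis enat_ord_simps(2) order_less_trans)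
    ultimately show False
      using that not_less_Least[of m' ?moves_at] unfolding m_def by blast
  qed
  then have "s m p = s k p"
    using path_frame[OF path] m by (simp add: order_less_imp_le)
  moreover have "step (s m) (t m) (s (Suc m))"
    using path m unfolding is_path_def by blast
  ultimately have "lbl (t m) = a"
    using owner m unfolding moves_only_with_def by metis
  then show ?thesis
    using m unfolding engaged_def eng_act_def by blast
qed

lemma enabled_action_engaged:
  assumes path: "is_path s t len" and en: "en_act a (s k)"
    and idle_fair: "\<And>p. perpetual en_comp s len k p \<Longrightarrow> engaged eng_comp t len k p"
    and sender_fair: "\<And>p l q. a = Lab p l q \<Longrightarrow> engaged eng_comp t len k p"
  shows "engaged eng_act t len k a"
proof (cases a)
  case Tau
  then obtain p where owner: "moves_only_with p Tau (s k p)"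
    and stable: "\<And>M. M p = s k p \<Longrightarrow> en_comp p M"
    using en en_act_Tau_D by metis
  have "engaged eng_comp t len k p"
  proof (rule ccontr)
    assume idle: "\<not> engaged eng_comp t len k p"
    then have "perpetual en_comp s len k p"
      unfolding perpetual_def using idle_component_frame[OF path idle] stable by blast
    with idle idle_fair show False
      by blast
  qed
  with first_move_engages[OF path owner] Tau show ?thesis
    by simp
next
  case (Lab p l q)
  then obtain Q where "s k p = Some (Out q l Q)"
    using en en_act_Lab_D by metis
  with first_move_engages[OF path] moves_only_with_Out sender_fair Lab show ?thesis
    by metis
qed

lemma perpetual_imp_relentless: "perpetual en s len i x \<Longrightarrow> relentless en s len i x"
  unfolding perpetual_def relentless_def by blast

lemma relentless_mono:
  "relentless en s len i x \<Longrightarrow> (\<And>N. en x N \<Longrightarrow> en' y N) \<Longrightarrow> relentless en' s len i y"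
  unfolding relentless_def by blast

lemma relentless_suffix: "relentless en s len i x \<Longrightarrow> i \<le> k \<Longrightarrow> relentless en s len k x"
  unfolding relentless_def by auto

lemma perpetual_mono:
  "perpetual en s len i x \<Longrightarrow> (\<And>N. en x N \<Longrightarrow> en' y N) \<Longrightarrow> perpetual en' s len i y"
  unfolding perpetual_def by blast

lemma engaged_mono: "engaged eng t len k x \<Longrightarrow> i \<le> k \<Longrightarrow> engaged eng t len i x"
  unfolding engaged_def by (meson order_trans)

lemma SC_fair_imp_SA_fair:
  assumes path: "is_path s t len" and SC: "SC_fair s t len"
  shows "SA_fair s t len"
  unfolding SA_fair_def strongly_fair_def
proof (intro allI impI)
  fix i a assume "enat i \<le> len" and rel: "relentless en_act s len i a"
  then obtain k where k: "i \<le> k" "enat k \<le> len" "en_act a (s k)"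
    unfolding relentless_def by blast
  have comp_fair: "relentless en_comp s len k p \<Longrightarrow> engaged eng_comp t len k p" for p
    using SC k(2) unfolding SC_fair_def strongly_fair_def by blast
  have "engaged eng_act t len k a"
  proof (rule enabled_action_engaged[OF path k(3)])
    show "engaged eng_comp t len k p" if "perpetual en_comp s len k p" for p
      by (rule comp_fair[OF perpetual_imp_relentless[OF that]])
    show "engaged eng_comp t len k p" if "a = Lab p l q" for p l q
      using comp_fair relentless_mono[OF relentless_suffix[OF rel k(1)]]
        en_act_Lab_imp_en_comp that by metis
  qed
  then show "engaged eng_act t len i a"
    using k(1) by (rule engaged_mono)
qed

lemma WC_fair_imp_WA_fair:
  assumes path: "is_path s t len" and WC: "WC_fair s t len"
  shows "WA_fair s t len"
  unfolding WA_fair_def weakly_fair_def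
proof (intro allI impI)
  fix i a assume i: "enat i \<le> len" and perp: "perpetual en_act s len i a"
  have comp_fair: "perpetual en_comp s len i p \<Longrightarrow> engaged eng_comp t len i p" for p
    using WC i unfolding WC_fair_def weakly_fair_def by blast
  show "engaged eng_act t len i a"
  proof (rule enabled_action_engaged[OF path _ comp_fair])
    show "en_act a (s i)"
      using perp i unfolding perpetual_def by blast
    show "engaged eng_comp t len i p" if "a = Lab p l q" for p l q
      using comp_fair perpetual_mono[OF perp] en_act_Lab_imp_en_comp that by metis
  qed
qed

theorem mainTheorem14:
  fixes s :: "nat \<Rightarrow> ('loc, 'lab, 'var) net"
    and t :: "nat \<Rightarrow> ('loc, 'lab) trans"
    and len :: enat
  assumes "wf_net (s 0)"
    and "is_path s t len"
  shows "(SC_fair s t len \<longrightarrow> SA_fair s t len) \<and> (WC_fair s t len \<longrightarrow> WA_fair s t len)"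
  using SC_fair_imp_SA_fair WC_fair_imp_WA_fair assms(2) by blast

end
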